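(* Let $X$ be a nonempty set and let $S$ be a regular semigroup together with a one-to-one mapping $\phi:X\to E(S)$ such that $S$ has no proper regular subsemigroup containing $X\phi$. Then there is a surjective semigroup homomorphism $\psi:FT(X)\to S$ with $[x]\psi=x\phi$ for all $x\in X$.
   Context: Let $1$ be a symbol not in $X$. Elements of height $\ge 2$ are triples $g=(g^l,g^c,g^r)$. Set $\Gamma_0(X)=\{1\}$, $\Gamma_1(X)=X$, and identify each $x\in X$ with $(1,x,1)$ (so $x^l=x^r=1$). For $i\ge 2$, $\Gamma_i(X)$ is the set of triples $g\in\Gamma_{i-1}(X)\times\Gamma_{i-2}(X)\times\Gamma_{i-1}(X)$ with $g^l\neq g^r$ and $g^c\in\{(g^l)^l,(g^l)^r\}\cap\{(g^r)^l,(g^r)^r\}$. Let $\Gamma(X)=\bigcup_{i\ge0}\Gamma_i(X)$ (height of $g$ = the $i$ with $g\in\Gamma_i(X)$). Let $\rho$ be the smallest congruence on the free semigroup $\Gamma(X)^+$ containing $(1g,g),(g1,g),(gg,g)$ for all $g\in\Gamma(X)$, and $(g^cg^lg,g)$, $(gg^rg^c,g)$, $(g^rg^cgg^cg^l,\,g^rg^cg^l)$ for all $g$ of height $\ge2$. $FT^1(X)=\Gamma(X)^+/\rho$ with $[u]$ the class of $u$, and $FT(X)=FT^1(X)\setminus\{[1]\}$. $E(S)$ denotes the set of idempotents of $S$. *)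

theory Defs
  imports Main
begin

text \<open>Elements of Gamma(X): the symbol 1 (One), elements x of X (Leaf x, identified
with (1,x,1)), and triples g = (g^l, g^c, g^r) (Tri).\<close>

datatype 'a gam = One | Leaf 'a | Tri "'a gam" "'a gam" "'a gam"

fun gl :: "'a gam \<Rightarrow> 'a gam" where
  "gl One = One" | "gl (Leaf x) = One" | "gl (Tri l c r) = l"

fun gc :: "'a gam \<Rightarrow> 'a gam" where
  "gc One = One" | "gc (Leaf x) = Leaf x" | "gc (Tri l c r) = c"

fun gr :: "'a gam \<Rightarrow> 'a gam" where
  "gr One = One" | "gr (Leaf x) = One" | "gr (Tri l c r) = r"

fun Gamma :: "'a set \<Rightarrow> nat \<Rightarrow> 'a gam set" where
  "Gamma X 0 = {One}"
| "Gamma X (Suc 0) = Leaf ` X"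
| "Gamma X (Suc (Suc i)) =
     {Tri l c r | l c r. l \<in> Gamma X (Suc i) \<and> c \<in> Gamma X i \<and> r \<in> Gamma X (Suc i)
        \<and> l \<noteq> r \<and> c \<in> {gl l, gr l} \<inter> {gl r, gr r}}"

definition Gam :: "'a set \<Rightarrow> 'a gam set" where
  "Gam X = (\<Union>i. Gamma X i)"

definition Gam2 :: "'a set \<Rightarrow> 'a gam set" where
  "Gam2 X = (\<Union>i\<in>{2..}. Gamma X i)"

definition Gplus :: "'a set \<Rightarrow> 'a gam list set" where
  "Gplus X = {u. u \<noteq> [] \<and> set u \<subseteq> Gam X}"

inductive rho :: "'a set \<Rightarrow> 'a gam list \<Rightarrow> 'a gam list \<Rightarrow> bool" for X where
  gen1: "g \<in> Gam X \<Longrightarrow> rho X [One, g] [g]"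
| gen2: "g \<in> Gam X \<Longrightarrow> rho X [g, One] [g]"
| gen3: "g \<in> Gam X \<Longrightarrow> rho X [g, g] [g]"
| gen4: "g \<in> Gam2 X \<Longrightarrow> rho X [gc g, gl g, g] [g]"
| gen5: "g \<in> Gam2 X \<Longrightarrow> rho X [g, gr g, gc g] [g]"
| gen6: "g \<in> Gam2 X \<Longrightarrow> rho X [gr g, gc g, g, gc g, gl g] [gr g, gc g, gl g]"
| refl: "u \<in> Gplus X \<Longrightarrow> rho X u u"
| sym: "rho X u v \<Longrightarrow> rho X v u"
| trans: "rho X u v \<Longrightarrow> rho X v w \<Longrightarrow> rho X u w"
| left: "rho X u v \<Longrightarrow> w \<in> Gplus X \<Longrightarrow> rho X (w @ u) (w @ v)"
| right: "rho X u v \<Longrightarrow> w \<in> Gplus X \<Longrightarrow> rho X (u @ w) (v @ w)"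

definition cls :: "'a set \<Rightarrow> 'a gam list \<Rightarrow> 'a gam list set" where
  "cls X u = {v \<in> Gplus X. rho X u v}"

definition FT1 :: "'a set \<Rightarrow> 'a gam list set set" where
  "FT1 X = cls X ` Gplus X"

definition FT :: "'a set \<Rightarrow> 'a gam list set set" where
  "FT X = FT1 X - {cls X [One]}"

text \<open>Multiplication of classes: [u][v] = [uv] (well defined since rho is a congruence).\<close>

definition ft_mult :: "'a set \<Rightarrow> 'a gam list set \<Rightarrow> 'a gam list set \<Rightarrow> 'a gam list set" where
  "ft_mult X A B = cls X ((SOME u. u \<in> A) @ (SOME v. v \<in> B))"

definition idempotents :: "'s::semigroup_mult set" where
  "idempotents = {e. e * e = e}"

definition regular_subsemigroup :: "'s::semigroup_mult set \<Rightarrow> bool" where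
  "regular_subsemigroup T \<longleftrightarrow> T \<noteq> {} \<and> (\<forall>a\<in>T. \<forall>b\<in>T. a * b \<in> T)
      \<and> (\<forall>a\<in>T. \<exists>b\<in>T. a * b * a = a)"

definition regular_semigroup :: "'s::semigroup_mult itself \<Rightarrow> bool" where
  "regular_semigroup _ \<longleftrightarrow> (\<forall>a::'s. \<exists>b. a * b * a = a)"

end

theory Submission
  imports Defs
begin

(*
  The monoid S^1 is modelled as 's option, None being the adjoined identity. Gamma(X) is
  evaluated in S^1 by sending x to x phi and a triple (l, c, r) to the sandwich element
  c l y r c, where y is an inverse of r c l. By induction on the height these values are
  idempotents satisfying the defining relations of rho, so evaluating words induces a
  homomorphism psi on FT(X) with [x] psi = x phi. Its image contains X phi, hence is all of S
  once it is a regular subsemigroup, i.e. once the value of every word over Gamma(X) has an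
  inverse that is again the value of a word.

  This is proved by induction on the largest height K of a letter. A zigzag of height K is a
  word y0 c0 y1 c1 ... yn of letters of height K in which c_i is a common child of y_i and
  y_(i+1). Dropping y0 and yn and replacing every c_i by the triple (y_(i+1), c_i, y_i) gives a
  shorter zigzag of height K + 1 whose value, multiplied by y0 on the left and by yn on the
  right, is the value of the original one. Since y0 and yn are children of the end letters of
  the new zigzag, and multiplying a regular element s by a child of an idempotent e with
  e s = s keeps it regular, zigzags have regular values. A general word of height K + 1 is a
  zigzag of height K + 1 framed by factors that preserve regularity in this way: the letters
  strictly between two letters of height K + 1 are flanked by children of these two letters,
  so by induction they factor through a zigzag of height K, which lifts to height K + 1.
*)

instantiation option :: (semigroup_mult) monoid_mult
begin

definition one_option_def: "1 = None"

definition times_option_def: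
  "x * y = (case x of None \<Rightarrow> y | Some a \<Rightarrow> (case y of None \<Rightarrow> Some a | Some b \<Rightarrow> Some (a * b)))"

instance
  by standard (auto simp: one_option_def times_option_def mult.assoc split: option.splits)

end

lemma times_option_simps [simp]:
  "None * y = y" "x * None = x" "Some a * Some b = Some (a * b)"
  by (auto simp: times_option_def split: option.splits)

lemma one_option_eq_None [simp]: "1 = None"
  by (simp add: one_option_def)

lemma times_option_eq_None_iff [simp]: "x * y = None \<longleftrightarrow> x = None \<and> y = None"
  by (cases x; cases y) auto

lemma regular_semigroup_option_inverse:
  assumes "regular_semigroup TYPE('s::semigroup_mult)"
  shows "\<exists>y. (m :: 's option) * y * m = m \<and> y * m * y = y"
proof (cases m)
  case (Some a)
  obtain b where "a * b * a = a"
    using assms unfolding regular_semigroup_def by blast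
  then have "a * (b * a * b) * a = a" "b * a * b * a * (b * a * b) = b * a * b"
    by (metis mult.assoc)+
  with Some show ?thesis
    by (intro exI[of _ "Some (b * a * b)"]) simp
qed auto

definition regular_in :: "'a::semigroup_mult set \<Rightarrow> 'a \<Rightarrow> bool" where
  "regular_in T s \<longleftrightarrow> (\<exists>v\<in>T. s * v * s = s)"

definition preserves_regular_left :: "'a::semigroup_mult set \<Rightarrow> 'a \<Rightarrow> 'a \<Rightarrow> bool" where
  "preserves_regular_left T L p \<longleftrightarrow> (\<forall>s. p * s = s \<longrightarrow> regular_in T s \<longrightarrow> regular_in T (L * s))"

definition preserves_regular_right :: "'a::semigroup_mult set \<Rightarrow> 'a \<Rightarrow> 'a \<Rightarrow> bool" where
  "preserves_regular_right T R q \<longleftrightarrow> (\<forall>s. s * q = s \<longrightarrow> regular_in T s \<longrightarrow> regular_in T (s * R))"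

lemma preserves_regular_left_1: "preserves_regular_left T (1::'a::monoid_mult) p"
  by (simp add: preserves_regular_left_def)

lemma preserves_regular_right_1: "preserves_regular_right T (1::'a::monoid_mult) q"
  by (simp add: preserves_regular_right_def)

context
  fixes T :: "'a::semigroup_mult set"
  assumes mult_closed: "\<And>a b. a \<in> T \<Longrightarrow> b \<in> T \<Longrightarrow> a * b \<in> T"
begin

lemma regular_in_mult_left:
  assumes "regular_in T s" "p * s = s" "p * e * p = p" "p \<in> T"
  shows "regular_in T (e * s)"
proof -
  obtain v where v: "v \<in> T" "s * v * s = s"
    using assms(1) unfolding regular_in_def by blast
  have "p * e * s = s"
    using assms(2,3) by (metis mult.assoc)
  then have "e * s * (v * p) * (e * s) = e * s"
    using v(2) by (metis mult.assoc)
  then show ?thesis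
    unfolding regular_in_def using mult_closed[OF v(1) assms(4)] by blast
qed

lemma regular_in_mult_right:
  assumes "regular_in T s" "s * q = s" "q * e * q = q" "q \<in> T"
  shows "regular_in T (s * e)"
proof -
  obtain v where v: "v \<in> T" "s * v * s = s"
    using assms(1) unfolding regular_in_def by blast
  have "s * e * q = s"
    using assms(2,3) by (metis mult.assoc)
  then have "s * e * (q * v) * (s * e) = s * e"
    using v(2) by (metis mult.assoc)
  then show ?thesis
    unfolding regular_in_def using mult_closed[OF assms(4) v(1)] by blast
qed

lemma preserves_regular_left_mult:
  assumes "preserves_regular_left T L e" "e * e = e" "q * e * q = q" "q \<in> T"
  shows "preserves_regular_left T (L * e) q"
  unfolding preserves_regular_left_def
proof (intro allI impI)
  fix s assume "q * s = s" "regular_in T s"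
  then have "regular_in T (e * s)"
    using regular_in_mult_left assms(3,4) by blast
  moreover have "e * (e * s) = e * s"
    using assms(2) by (metis mult.assoc)
  ultimately show "regular_in T (L * e * s)"
    using assms(1) unfolding preserves_regular_left_def by (metis mult.assoc)
qed

lemma preserves_regular_right_mult:
  assumes "preserves_regular_right T R e" "e * e = e" "q * e * q = q" "q \<in> T"
  shows "preserves_regular_right T (e * R) q"
  unfolding preserves_regular_right_def
proof (intro allI impI)
  fix s assume "s * q = s" "regular_in T s"
  then have "regular_in T (s * e)"
    using regular_in_mult_right assms(3,4) by blast
  moreover have "s * e * e = s * e"
    using assms(2) by (metis mult.assoc)
  ultimately show "regular_in T (s * (e * R))"
    using assms(1) unfolding preserves_regular_right_def by (metis mult.assoc)
qed

end

lemma regular_subsemigroup_Some_vimage: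
  fixes T :: "'s::semigroup_mult option set"
  assumes mult_closed: "\<And>a b. a \<in> T \<Longrightarrow> b \<in> T \<Longrightarrow> a * b \<in> T"
    and regular: "\<And>a. a \<in> T \<Longrightarrow> regular_in T a"
    and "Some -` T \<noteq> {}"
  shows "regular_subsemigroup (Some -` T)"
  unfolding regular_subsemigroup_def
proof (intro conjI ballI)
  fix a b assume "a \<in> Some -` T" "b \<in> Some -` T"
  then show "a * b \<in> Some -` T"
    using mult_closed by (metis times_option_simps(3) vimageE vimageI)
next
  fix a assume a: "a \<in> Some -` T"
  then obtain v where v: "v \<in> T" "Some a * v * Some a = Some a"
    using regular unfolding regular_in_def by blast
  show "\<exists>b\<in>Some -` T. a * b * a = a"
  proof (cases v)
    case None
    then show ?thesis using a v(2) by (intro bexI[of _ a]) (auto simp: mult.assoc)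
  next
    case (Some b)
    then show ?thesis using v by auto
  qed
qed (use assms(3) in simp)

text \<open>The element \<open>h\<close> lies in the sandwich set of the idempotents \<open>r * c\<close> and \<open>c * l\<close>.\<close>

lemma sandwich_element:
  fixes c l r y :: "'m::semigroup_mult"
  assumes cc: "c * c = c" and lcl: "l * c * l = l" and rcr: "r * c * r = r"
    and y1: "(r * c * l) * y * (r * c * l) = r * c * l" and y2: "y * (r * c * l) * y = y"
  defines "h \<equiv> c * l * y * (r * c)"
  shows "h * h = h" "c * l * h = h" "h * r * c = h" "r * c * h * c * l = r * c * l"
    "h * l * h = h" "h * r * h = h"
proof -
  have cc': "c * (c * x) = c * x" for x using cc by (simp add: mult.assoc[symmetric])
  have lcl': "l * (c * (l * x)) = l * x" "l * (c * l) = l" for x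
    using lcl by (simp_all add: mult.assoc[symmetric])
  have rcr': "r * (c * (r * x)) = r * x" "r * (c * r) = r" for x
    using rcr by (simp_all add: mult.assoc[symmetric])
  have y1': "r * (c * (l * (y * (r * (c * l))))) = r * (c * l)"
    "r * (c * (l * (y * (r * (c * (l * x)))))) = r * (c * (l * x))" for x
    using y1 by (simp_all add: mult.assoc[symmetric])
  have y2': "y * (r * (c * (l * y))) = y" "y * (r * (c * (l * (y * x)))) = y * x" for x
    using y2 by (simp_all add: mult.assoc[symmetric])
  note rules = cc cc' lcl' rcr' y1' y2'
  show "h * h = h" "c * l * h = h" "h * r * c = h" "r * c * h * c * l = r * c * l"
    "h * l * h = h" "h * r * h = h"
    unfolding h_def by (simp_all add: mult.assoc rules)
qed

fun height :: "'a gam \<Rightarrow> nat" where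
  "height One = 0"
| "height (Leaf x) = 1"
| "height (Tri l c r) = Suc (height l)"

lemma height_Gamma: "g \<in> Gamma X i \<Longrightarrow> height g = i"
  by (induction X i arbitrary: g rule: Gamma.induct) auto

lemma Gam_iff: "g \<in> Gam X \<longleftrightarrow> g \<in> Gamma X (height g)"
  unfolding Gam_def using height_Gamma by blast

lemma Gamma_subset_Gam: "g \<in> Gamma X i \<Longrightarrow> g \<in> Gam X"
  unfolding Gam_def by blast

lemma One_in_Gam [simp]: "One \<in> Gam X"
  using Gamma_subset_Gam[of One X 0] by simp

lemma Leaf_in_Gam_iff [simp]: "Leaf x \<in> Gam X \<longleftrightarrow> x \<in> X"
  by (auto simp: Gam_iff)

lemma Gam_height_Gamma: "g \<in> Gam X \<Longrightarrow> height g = K \<Longrightarrow> g \<in> Gamma X K"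
  by (simp add: Gam_iff)

lemma Gam_height_0: "g \<in> Gam X \<Longrightarrow> height g = 0 \<Longrightarrow> g = One"
  by (simp add: Gam_iff)

lemma Gamma_Suc_children: "g \<in> Gamma X (Suc i) \<Longrightarrow> gl g \<in> Gamma X i \<and> gr g \<in> Gamma X i"
  by (cases i) auto

lemma Gamma_Suc_Suc_TriE:
  assumes "g \<in> Gamma X (Suc (Suc i))"
  obtains l c r where "g = Tri l c r" "Tri l c r \<in> Gam X" "l \<in> Gam X" "c \<in> Gam X" "r \<in> Gam X"
    "height l = Suc i" "height c = i" "height r = Suc i"
proof -
  from assms obtain l c r where t: "g = Tri l c r" "l \<in> Gamma X (Suc i)" "c \<in> Gamma X i" "r \<in> Gamma X (Suc i)"
    by auto
  show ?thesis
    using that[OF t(1) Gamma_subset_Gam[OF assms[unfolded t(1)]]] t(2-4) Gamma_subset_Gam height_Gamma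
    by blast
qed

lemma Tri_in_Gam_D:
  assumes "Tri l c r \<in> Gam X"
  shows "l \<in> Gam X" "c \<in> Gam X" "r \<in> Gam X" "l \<noteq> One" "c \<in> {gl l, gr l}" "c \<in> {gl r, gr r}"
proof -
  have "Tri l c r \<in> Gamma X (Suc (height l))"
    using assms by (simp add: Gam_iff)
  then obtain i where "Tri l c r \<in> Gamma X (Suc (Suc i))"
    by (cases "height l") auto
  then show "l \<in> Gam X" "c \<in> Gam X" "r \<in> Gam X" "l \<noteq> One" "c \<in> {gl l, gr l}" "c \<in> {gl r, gr r}"
    using Gamma_subset_Gam height_Gamma by fastforce+
qed

lemma Tri_in_Gamma:
  assumes "y \<in> Gamma X K" "y' \<in> Gamma X K" "y \<noteq> y'" "c \<in> {gl y, gr y}" "c \<in> {gl y', gr y'}"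
  shows "Tri y' c y \<in> Gamma X (Suc K)"
proof (cases K)
  case (Suc i)
  then show ?thesis
    using assms Gamma_Suc_children[of y X i] by auto
qed (use assms in auto)

lemma Gam2_Tri: "g \<in> Gam2 X \<Longrightarrow> \<exists>l c r. g = Tri l c r \<and> g \<in> Gam X"
proof -
  assume "g \<in> Gam2 X"
  then obtain j where "g \<in> Gamma X j" "2 \<le> j"
    unfolding Gam2_def by blast
  then obtain i where "g \<in> Gamma X (Suc (Suc i))"
    by (metis add_2_eq_Suc le_Suc_ex)
  then show ?thesis
    by (elim Gamma_Suc_Suc_TriE) blast
qed

lemma Gam2_parts_in_Gam: "g \<in> Gam2 X \<Longrightarrow> g \<in> Gam X \<and> gl g \<in> Gam X \<and> gc g \<in> Gam X \<and> gr g \<in> Gam X"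
proof -
  assume "g \<in> Gam2 X"
  then obtain l c r where "g = Tri l c r" "Tri l c r \<in> Gam X"
    using Gam2_Tri by blast
  then show ?thesis
    using Tri_in_Gam_D[of l c r X] by simp
qed

lemma rho_Gplus: "rho X u v \<Longrightarrow> u \<in> Gplus X \<and> v \<in> Gplus X"
  by (induction rule: rho.induct) (auto simp: Gplus_def dest: Gam2_parts_in_Gam)

lemma rho_all_One: "u \<in> Gplus X \<Longrightarrow> \<forall>g\<in>set u. g = One \<Longrightarrow> rho X u [One]"
proof (induction u)
  case (Cons a u)
  show ?case
  proof (cases "u = []")
    case True
    then show ?thesis
      using Cons.prems rho.refl[of "[One]" X] by (simp add: Gplus_def)
  next
    case False
    then have "rho X u [One]"
      using Cons by (simp add: Gplus_def)
    then have "rho X ([One] @ u) ([One] @ [One])"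
      by (rule rho.left) (simp add: Gplus_def)
    then show ?thesis
      using Cons.prems rho.trans rho.gen3[of One X] by simp
  qed
qed (simp add: Gplus_def)

lemma cls_eqI: "rho X u v \<Longrightarrow> cls X u = cls X v"
  unfolding cls_def by (auto intro: rho.trans rho.sym)

lemma rho_some_cls: "u \<in> Gplus X \<Longrightarrow> rho X u (SOME v. v \<in> cls X u)"
proof -
  assume "u \<in> Gplus X"
  then have "u \<in> cls X u"
    by (simp add: cls_def rho.refl)
  then show ?thesis
    using someI[of "\<lambda>v. v \<in> cls X u"] by (simp add: cls_def)
qed

lemma ft_mult_cls:
  assumes "u \<in> Gplus X" "v \<in> Gplus X"
  shows "ft_mult X (cls X u) (cls X v) = cls X (u @ v)"
proof -
  define u' v' where "u' = (SOME w. w \<in> cls X u)" and "v' = (SOME w. w \<in> cls X v)"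
  have u': "rho X u u'" and v': "rho X v v'"
    using rho_some_cls assms by (simp_all add: u'_def v'_def)
  have "rho X (u @ v) (u' @ v)"
    using u' assms(2) by (rule rho.right)
  moreover have "rho X (u' @ v) (u' @ v')"
    using v' rho_Gplus[OF u'] by (blast intro: rho.left)
  ultimately have "cls X (u' @ v') = cls X (u @ v)"
    using cls_eqI rho.trans by metis
  then show ?thesis
    by (simp add: ft_mult_def u'_def v'_def)
qed

section \<open>Zigzags\<close>

definition words_upto :: "'a set \<Rightarrow> nat \<Rightarrow> 'a gam list set" where
  "words_upto X K = {u. set u \<subseteq> Gam X \<and> (\<forall>g\<in>set u. height g \<le> K)}"

lemma words_upto_simps [simp]:
  "[] \<in> words_upto X K"
  "g # u \<in> words_upto X K \<longleftrightarrow> g \<in> Gam X \<and> height g \<le> K \<and> u \<in> words_upto X K"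
  "u @ v \<in> words_upto X K \<longleftrightarrow> u \<in> words_upto X K \<and> v \<in> words_upto X K"
  by (auto simp: words_upto_def)

lemma words_upto_Suc_lower:
  "u \<in> words_upto X (Suc K) \<Longrightarrow> \<forall>g\<in>set u. height g \<noteq> Suc K \<Longrightarrow> u \<in> words_upto X K"
  by (auto simp: words_upto_def le_Suc_eq)

lemma words_upto_0: "u \<in> words_upto X 0 \<Longrightarrow> \<forall>g\<in>set u. g = One"
  unfolding words_upto_def using Gam_height_0 by blast

inductive zigzag :: "'a set \<Rightarrow> nat \<Rightarrow> 'a gam list \<Rightarrow> bool" for X where
  single: "y \<in> Gamma X K \<Longrightarrow> zigzag X K [y]"
| cons: "y \<in> Gamma X K \<Longrightarrow> zigzag X K (y' # w) \<Longrightarrow> y \<noteq> y' \<Longrightarrow>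
    c \<in> {gl y, gr y} \<Longrightarrow> c \<in> {gl y', gr y'} \<Longrightarrow> zigzag X K (y # c # y' # w)"

lemma zigzag_hd_last: "zigzag X K w \<Longrightarrow> w \<noteq> [] \<and> hd w \<in> Gamma X K \<and> last w \<in> Gamma X K"
  by (induction rule: zigzag.induct) auto

lemma zigzag_subset_Gam: "zigzag X K w \<Longrightarrow> set w \<subseteq> Gam X"
proof (induction rule: zigzag.induct)
  case (cons y K y' w c)
  then have "c \<in> Gamma X (K - 1)"
    using Gamma_Suc_children[of y X "K - 1"] by (cases K) auto
  with cons show ?case
    using Gamma_subset_Gam by auto
qed (simp add: Gamma_subset_Gam)

lemma zigzag_Cons_ConsE:
  assumes "zigzag X K (y # c # y' # w)"
  obtains "y \<in> Gamma X K" "y' \<in> Gamma X K" "zigzag X K (y' # w)" "y \<noteq> y'"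
    "c \<in> {gl y, gr y}" "c \<in> {gl y', gr y'}" "Tri y' c y \<in> Gamma X (Suc K)"
proof -
  from assms have "y \<in> Gamma X K \<and> zigzag X K (y' # w) \<and> y \<noteq> y' \<and> c \<in> {gl y, gr y} \<and> c \<in> {gl y', gr y'}"
    by (cases rule: zigzag.cases) auto
  moreover from this have "y' \<in> Gamma X K"
    using zigzag_hd_last[of X K "y' # w"] by simp
  ultimately show ?thesis
    using that Tri_in_Gamma by blast
qed

lemma zigzag_short: "zigzag X K w \<Longrightarrow> length w < 3 \<Longrightarrow> w = [hd w]"
  by (auto elim: zigzag.cases)

fun lift :: "'a gam list \<Rightarrow> 'a gam list" where
  "lift [y, c, y'] = [Tri y' c y]"
| "lift (y # c # y' # c' # w) = Tri y' c y # y' # lift (y' # c' # w)"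
| "lift _ = []"

lemma length_lift: "length (lift v) = length v - 2"
  by (induction v rule: lift.induct) auto

lemma hd_lift: "3 \<le> length v \<Longrightarrow> hd (lift v) = Tri (v ! 2) (v ! 1) (hd v)"
  by (induction v rule: lift.induct) auto

lemma zigzag_lift:
  "zigzag X K v \<Longrightarrow> 3 \<le> length v \<Longrightarrow> zigzag X (Suc K) (lift v) \<and> gl (last (lift v)) = last v"
proof (induction v rule: lift.induct)
  case (1 y c y')
  then show ?case
    by (auto intro: zigzag.single elim: zigzag_Cons_ConsE)
next
  case (2 y c y' c' w)
  from "2.prems"(1) obtain z: "zigzag X K (y' # c' # w)" and t: "Tri y' c y \<in> Gamma X (Suc K)"
    and "y \<noteq> y'"
    by (rule zigzag_Cons_ConsE)
  from z obtain y'' w' where w: "w = y'' # w'"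
    by (cases rule: zigzag.cases) auto
  define L where "L = lift (y' # c' # w)"
  have IH: "zigzag X (Suc K) L" "gl (last L) = last w"
    using "2.IH"[OF z] w by (simp_all add: L_def)
  obtain L' where L: "L = Tri y'' c' y' # L'"
    using hd_lift[of "y' # c' # w"] length_lift[of "y' # c' # w"] w
    by (cases L) (auto simp: L_def)
  have "zigzag X (Suc K) (Tri y' c y # y' # L)"
    using IH(1) t \<open>y \<noteq> y'\<close> unfolding L by (intro zigzag.cons) auto
  moreover have "lift (y # c # y' # c' # w) = Tri y' c y # y' # L"
    by (simp add: L_def)
  ultimately show ?case
    using IH(2) w by (simp add: L)
qed auto

section \<open>Evaluating \<open>\<Gamma>(X)\<close> in \<open>S\<^sup>1\<close>\<close>

text \<open>The value of \<open>Tri l c r\<close> is the sandwich element built from an inverse of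
  \<open>r * c * l\<close>; such an inverse exists in a regular semigroup, so the \<open>SOME\<close> is never taken
  over an empty predicate.\<close>

fun gam_val :: "('a \<Rightarrow> 's::semigroup_mult) \<Rightarrow> 'a gam \<Rightarrow> 's option" where
  "gam_val \<phi> One = 1"
| "gam_val \<phi> (Leaf x) = Some (\<phi> x)"
| "gam_val \<phi> (Tri l c r) =
     (let z = gam_val \<phi> r * gam_val \<phi> c * gam_val \<phi> l
      in gam_val \<phi> c * gam_val \<phi> l * (SOME y. z * y * z = z \<and> y * z * y = y) * (gam_val \<phi> r * gam_val \<phi> c))"

declare gam_val.simps(3) [simp del]

locale gamma_eval =
  fixes X :: "'a set" and \<phi> :: "'a \<Rightarrow> 's::semigroup_mult"
  assumes regular: "regular_semigroup TYPE('s)"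
    and idempotent: "\<phi> ` X \<subseteq> idempotents"
begin

abbreviation val :: "'a gam \<Rightarrow> 's option" where
  "val \<equiv> gam_val \<phi>"

lemma val_Tri_sandwich:
  assumes "val c * val c = val c" "val l * val c * val l = val l" "val r * val c * val r = val r"
  defines "t \<equiv> Tri l c r"
  shows "val t * val t = val t" "val c * val l * val t = val t" "val t * val r * val c = val t"
    "val r * val c * val t * val c * val l = val r * val c * val l"
    "val t * val l * val t = val t" "val t * val r * val t = val t"
proof -
  define z where "z = val r * val c * val l"
  define y where "y = (SOME y. z * y * z = z \<and> y * z * y = y)"
  have y: "z * y * z = z" "y * z * y = y"
    unfolding y_def using someI_ex[OF regular_semigroup_option_inverse[OF regular]] by blast+
  have "val t = val c * val l * y * (val r * val c)"
    by (simp add: t_def y_def z_def gam_val.simps(3) Let_def)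
  then show "val t * val t = val t" "val c * val l * val t = val t" "val t * val r * val c = val t"
    "val r * val c * val t * val c * val l = val r * val c * val l"
    "val t * val l * val t = val t" "val t * val r * val t = val t"
    using sandwich_element[OF assms(1-3), of y] y unfolding z_def by simp_all
qed

lemma val_idempotent_absorbs_children:
  "g \<in> Gam X \<Longrightarrow> val g * val g = val g \<and> (\<forall>ch\<in>{gl g, gr g}. val g * val ch * val g = val g)"
proof (induction g)
  case (Leaf x)
  then show ?case
    using idempotent by (auto simp: idempotents_def)
next
  case (Tri l c r)
  from Tri_in_Gam_D[OF Tri.prems] have "val c * val c = val c" "val l * val c * val l = val l" "val r * val c * val r = val r"
    using Tri.IH by auto
  then show ?case
    using val_Tri_sandwich by simp
qed simp

lemma val_idempotent: "g \<in> Gam X \<Longrightarrow> val g * val g = val g"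
  using val_idempotent_absorbs_children by blast

lemma val_absorbs_child: "g \<in> Gam X \<Longrightarrow> ch \<in> {gl g, gr g} \<Longrightarrow> val g * val ch * val g = val g"
  using val_idempotent_absorbs_children by blast

lemma val_neq_None: "g \<in> Gam X \<Longrightarrow> g \<noteq> One \<Longrightarrow> val g \<noteq> None"
proof (induction g)
  case (Tri l c r)
  then show ?case
    using Tri_in_Gam_D[OF Tri.prems(1)] by (auto simp: gam_val.simps(3) Let_def)
qed auto

context
  fixes l c r
  assumes Tri: "Tri l c r \<in> Gam X"
begin

lemma val_Tri:
  "val c * val l * val (Tri l c r) = val (Tri l c r)"
  "val (Tri l c r) * val r * val c = val (Tri l c r)"
  "val r * val c * val (Tri l c r) * val c * val l = val r * val c * val l"
  using val_Tri_sandwich Tri_in_Gam_D[OF Tri] val_absorbs_child val_idempotent by simp_all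

lemma val_Tri_bridge: "val r * val (Tri l c r) * val l = val r * val c * val l"
proof -
  have cc: "val c * val c = val c"
    using val_idempotent Tri_in_Gam_D(2)[OF Tri] .
  have "val c * val (Tri l c r) = val (Tri l c r)" "val (Tri l c r) * val c = val (Tri l c r)"
    using val_Tri(1,2) cc by (metis mult.assoc)+
  then show ?thesis
    using val_Tri(3) by (metis mult.assoc)
qed

end

definition wval :: "'a gam list \<Rightarrow> 's option" where
  "wval w = prod_list (map val w)"

lemma wval_simps [simp]: "wval [] = 1" "wval (g # w) = val g * wval w" "wval (u @ v) = wval u * wval v"
  by (simp_all add: wval_def)

lemma hd_mult_wval: "w \<noteq> [] \<Longrightarrow> set w \<subseteq> Gam X \<Longrightarrow> val (hd w) * wval w = wval w"
  by (cases w) (auto simp: val_idempotent mult.assoc[symmetric])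

lemma wval_mult_last: "w \<noteq> [] \<Longrightarrow> set w \<subseteq> Gam X \<Longrightarrow> wval w * val (last w) = wval w"
  by (cases w rule: rev_cases) (auto simp: val_idempotent mult.assoc)

lemma wval_overlap: "g \<in> Gam X \<Longrightarrow> wval (u @ [g]) * wval (g # v) = wval (u @ g # v)"
proof -
  assume "g \<in> Gam X"
  then have "val g * (val g * x) = val g * x" for x
    using val_idempotent by (metis mult.assoc)
  then show ?thesis
    by (simp add: mult.assoc)
qed

lemma wval_Cons_Tri: "Tri l c r \<in> Gam X \<Longrightarrow> wval (Tri l c r # w) = val (Tri l c r) * wval (r # c # w)"
  using val_Tri(2) by (simp add: mult.assoc[symmetric])

lemma wval_snoc_Tri: "Tri l c r \<in> Gam X \<Longrightarrow> wval (w @ [Tri l c r]) = wval (w @ [c, l]) * val (Tri l c r)"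
  using val_Tri(1) by (simp add: mult.assoc)

lemma wval_eq_None_iff: "set w \<subseteq> Gam X \<Longrightarrow> wval w = None \<longleftrightarrow> (\<forall>g\<in>set w. g = One)"
  by (induction w) (auto dest: val_neq_None)

lemma wval_words_upto_0: "w \<in> words_upto X 0 \<Longrightarrow> wval w = 1"
  using words_upto_0 wval_eq_None_iff by (simp add: words_upto_def)

lemma rho_wval: "rho X u v \<Longrightarrow> wval u = wval v"
proof (induction rule: rho.induct)
  case (gen4 g)
  then show ?case using val_Tri(1) Gam2_Tri by (fastforce simp: mult.assoc)
next
  case (gen5 g)
  then show ?case using val_Tri(2) Gam2_Tri by (fastforce simp: mult.assoc)
next
  case (gen6 g)
  then show ?case using val_Tri(3) Gam2_Tri by (fastforce simp: mult.assoc)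
qed (simp_all add: val_idempotent mult.assoc)

definition word_vals :: "'s option set" where
  "word_vals = wval ` {w. set w \<subseteq> Gam X}"

lemma wval_in_word_vals: "set w \<subseteq> Gam X \<Longrightarrow> wval w \<in> word_vals"
  by (simp add: word_vals_def)

lemma val_in_word_vals: "g \<in> Gam X \<Longrightarrow> val g \<in> word_vals"
  using wval_in_word_vals[of "[g]"] by simp

lemma word_vals_mult_closed: "a \<in> word_vals \<Longrightarrow> b \<in> word_vals \<Longrightarrow> a * b \<in> word_vals"
  unfolding word_vals_def by (auto intro!: image_eqI[where x = "_ @ _"])

lemma wval_lift:
  "zigzag X K v \<Longrightarrow> 3 \<le> length v \<Longrightarrow> wval v = val (hd v) * wval (lift v) * val (last v)"
proof (induction v rule: lift.induct)
  case (1 y c y')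
  then have "Tri y' c y \<in> Gam X"
    by (auto intro: Gamma_subset_Gam elim: zigzag_Cons_ConsE)
  then show ?case
    using val_Tri_bridge by (simp add: mult.assoc)
next
  case (2 y c y' c' w)
  from "2.prems"(1) obtain z: "zigzag X K (y' # c' # w)" and t: "Tri y' c y \<in> Gamma X (Suc K)"
    by (rule zigzag_Cons_ConsE)
  have bridge: "val y * val c * val y' = val y * val (Tri y' c y) * val y'"
    using val_Tri_bridge[OF Gamma_subset_Gam[OF t]] by simp
  from z have "w \<noteq> []"
    by (cases rule: zigzag.cases) auto
  have "wval (y # c # y' # c' # w) = val y * val c * wval (y' # c' # w)"
    by (simp add: mult.assoc)
  also have "\<dots> = val y * val c * val y' * wval (lift (y' # c' # w)) * val (last w)"
    using "2.IH"[OF z] \<open>w \<noteq> []\<close> by (simp add: mult.assoc Suc_le_eq)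
  also have "\<dots> = val y * wval (lift (y # c # y' # c' # w)) * val (last w)"
    unfolding bridge by (simp add: mult.assoc)
  finally show ?case
    using \<open>w \<noteq> []\<close> by simp
qed auto

lemma zigzag_extend_left:
  assumes z: "zigzag X K w" and g: "g \<in> Gamma X K"
    and c: "c \<in> {gl g, gr g}" "c \<in> {gl (hd w), gr (hd w)}"
  obtains w' where "zigzag X K w'" "hd w' = g" "last w' = last w" "wval w' = val g * val c * wval w"
proof (cases "g = hd w")
  case True
  have w: "w \<noteq> []" "set w \<subseteq> Gam X"
    using zigzag_hd_last[OF z] zigzag_subset_Gam[OF z] by auto
  have "val g * val c * wval w = val g * val c * val g * wval w"
    using hd_mult_wval[OF w] True by (simp add: mult.assoc)
  also have "\<dots> = wval w"
    using val_absorbs_child[OF Gamma_subset_Gam[OF g] c(1)] hd_mult_wval[OF w] True by simp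
  finally show ?thesis
    using that z True by simp
next
  case False
  have "w = hd w # tl w"
    using zigzag_hd_last[OF z] by simp
  then have "zigzag X K (g # c # w)"
    using z g c False by (metis zigzag.cons)
  then show ?thesis
    using that zigzag_hd_last[OF z] by (simp add: mult.assoc)
qed

lemma zigzag_join:
  assumes z1: "zigzag X K w1" and z2: "zigzag X K w2" and eq: "last w1 = hd w2"
  obtains w where "zigzag X K w" "hd w = hd w1" "last w = last w2" "wval w = wval w1 * wval w2"
proof -
  have w2: "w2 \<noteq> []" "set w2 \<subseteq> Gam X"
    using zigzag_hd_last[OF z2] zigzag_subset_Gam[OF z2] by auto
  have "zigzag X K (w1 @ tl w2) \<and> wval (w1 @ tl w2) = wval w1 * wval w2"
    using z1 z2 eq
  proof (induction rule: zigzag.induct)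
    case (single y K)
    then have "[y] @ tl w2 = w2"
      using w2 by (cases w2) auto
    with single show ?case
      using hd_mult_wval[OF w2] by simp
  next
    case (cons y K y' w c)
    then show ?case
      by (auto intro: zigzag.cons simp: mult.assoc)
  qed
  moreover have "hd (w1 @ tl w2) = hd w1" "last (w1 @ tl w2) = last w2"
    using zigzag_hd_last[OF z1] w2 eq by (cases w2; auto simp: last_append)+
  ultimately show ?thesis
    using that by blast
qed

lemma zigzag_extend_right:
  assumes z: "zigzag X K w" and h: "h \<in> Gamma X K"
    and c: "c \<in> {gl (last w), gr (last w)}" "c \<in> {gl h, gr h}"
  obtains w' where "zigzag X K w'" "hd w' = hd w" "last w' = h" "wval w' = wval w * val c * val h"
proof -
  obtain v where v: "zigzag X K v" "hd v = last w" "last v = h" "wval v = val (last w) * val c * val h"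
    using zigzag_extend_left[OF zigzag.single[OF h] _ c(1)] c(2) zigzag_hd_last[OF z] by auto
  obtain w' where w': "zigzag X K w'" "hd w' = hd w" "last w' = h" "wval w' = wval w * wval v"
    using zigzag_join[OF z v(1)] v(2,3) by metis
  have w: "w \<noteq> []" "set w \<subseteq> Gam X"
    using zigzag_hd_last[OF z] zigzag_subset_Gam[OF z] by auto
  have "wval w * wval v = wval w * val c * val h"
    using v(4) wval_mult_last[OF w] by (simp add: mult.assoc[symmetric])
  then show ?thesis
    using that w' by simp
qed

lemma regular_in_word_vals_zigzag: "zigzag X K w \<Longrightarrow> regular_in word_vals (wval w)"
proof (induction "length w" arbitrary: K w rule: less_induct)
  case less
  show ?case
  proof (cases "3 \<le> length w")
    case False
    then have "wval w = val (hd w)"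
      using zigzag_short[OF less.prems] by (metis not_less wval_simps(1,2) mult_1_right)
    moreover have "hd w \<in> Gam X"
      using zigzag_hd_last[OF less.prems] Gamma_subset_Gam by blast
    ultimately show ?thesis
      unfolding regular_in_def using val_in_word_vals val_idempotent by (intro bexI[of _ "val (hd w)"]) auto
  next
    case True
    define L where "L = lift w"
    have zL: "zigzag X (Suc K) L" "gl (last L) = last w" and hdL: "gr (hd L) = hd w"
      using zigzag_lift[OF less.prems True] hd_lift[OF True] by (simp_all add: L_def)
    have L: "L \<noteq> []" "set L \<subseteq> Gam X" "hd L \<in> Gam X" "last L \<in> Gam X"
      using zigzag_hd_last[OF zL(1)] zigzag_subset_Gam[OF zL(1)] Gamma_subset_Gam by auto
    have "length L < length w"
      using True by (simp add: L_def length_lift)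
    then have "regular_in word_vals (wval L)"
      using less.hyps zL(1) by blast
    then have "regular_in word_vals (val (hd w) * wval L)"
      using regular_in_mult_left[OF word_vals_mult_closed] hd_mult_wval[OF L(1,2)]
        val_absorbs_child[OF L(3)] val_in_word_vals[OF L(3)] hdL by simp
    moreover have "val (hd w) * wval L * val (last L) = val (hd w) * wval L"
      using wval_mult_last[OF L(1,2)] by (simp add: mult.assoc)
    ultimately have "regular_in word_vals (val (hd w) * wval L * val (last w))"
      using regular_in_mult_right[OF word_vals_mult_closed] val_absorbs_child[OF L(4)]
        val_in_word_vals[OF L(4)] zL(2) by simp
    then show ?thesis
      using wval_lift[OF less.prems True] by (simp add: L_def)
  qed
qed

lemma zigzag_lift_snoc:
  assumes z: "zigzag X K v" and h: "h \<in> Gamma X (Suc K)" and c: "last v \<in> {gl h, gr h}"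
  obtains w where "zigzag X (Suc K) w" "last w = h" "hd v \<in> {gl (hd w), gr (hd w)}"
    "wval v * val h = val (hd v) * wval w"
proof (cases "3 \<le> length v")
  case False
  then have "v = [hd v]"
    using zigzag_short[OF z] by simp
  then have "hd v = last v" "wval v = val (hd v)"
    by (metis last_ConsL, metis wval_simps(1,2) mult_1_right)
  then show ?thesis
    using that[of "[h]"] zigzag.single[OF h] c by simp
next
  case True
  have zL: "zigzag X (Suc K) (lift v)" "gl (last (lift v)) = last v" "gr (hd (lift v)) = hd v"
    using zigzag_lift[OF z True] hd_lift[OF True] by simp_all
  obtain w where w: "zigzag X (Suc K) w" "hd w = hd (lift v)" "last w = h"
    "wval w = wval (lift v) * val (last v) * val h"
    using zigzag_extend_right[OF zL(1) h _ c] zL(2) by auto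
  have "wval v * val h = val (hd v) * wval w"
    using wval_lift[OF z True] w(4) by (simp add: mult.assoc)
  then show ?thesis
    using that w zL(3) by simp
qed

lemma zigzag_lift_cons:
  assumes z: "zigzag X K v" and g: "g \<in> Gamma X (Suc K)" and c: "hd v \<in> {gl g, gr g}"
  obtains w where "zigzag X (Suc K) w" "hd w = g" "last v \<in> {gl (last w), gr (last w)}"
    "val g * wval v = wval w * val (last v)"
proof (cases "3 \<le> length v")
  case False
  then have "v = [hd v]"
    using zigzag_short[OF z] by simp
  then have "last v = hd v" "wval v = val (hd v)"
    by (metis last_ConsL, metis wval_simps(1,2) mult_1_right)
  then show ?thesis
    using that[of "[g]"] zigzag.single[OF g] c by simp
next
  case True
  have zL: "zigzag X (Suc K) (lift v)" "gl (last (lift v)) = last v" "gr (hd (lift v)) = hd v"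
    using zigzag_lift[OF z True] hd_lift[OF True] by simp_all
  obtain w where w: "zigzag X (Suc K) w" "hd w = g" "last w = last (lift v)"
    "wval w = val g * val (hd v) * wval (lift v)"
    using zigzag_extend_left[OF zL(1) g c] zL(3) by auto
  have "val g * wval v = wval w * val (last v)"
    using wval_lift[OF z True] w(4) by (simp add: mult.assoc)
  then show ?thesis
    using that w zL(2) by simp
qed

section \<open>Regularity of the values of words\<close>

text \<open>\<open>L\<close> and \<open>R\<close> account for the letters before the first and after the last letter of
  height \<open>K\<close>; they are trivial if there are none.\<close>

definition zigzag_factorisation ::
    "nat \<Rightarrow> 'a gam list \<Rightarrow> 's option \<Rightarrow> 'a gam list \<Rightarrow> 's option \<Rightarrow> bool" where
  "zigzag_factorisation K u L w R \<longleftrightarrow> zigzag X K w \<and> wval u = L * wval w * R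
     \<and> preserves_regular_left word_vals L (val (hd w))
     \<and> preserves_regular_right word_vals R (val (last w))
     \<and> (height (hd u) = K \<longrightarrow> L = 1 \<and> hd w = hd u)
     \<and> (height (last u) = K \<longrightarrow> R = 1 \<and> last w = last u)"

definition factors_through_zigzag :: "nat \<Rightarrow> bool" where
  "factors_through_zigzag K \<longleftrightarrow>
     (\<forall>u\<in>words_upto X K. (\<exists>g\<in>set u. height g = K) \<longrightarrow> (\<exists>L w R. zigzag_factorisation K u L w R))"

lemma factors_through_zigzagE:
  assumes "factors_through_zigzag K" "u \<in> words_upto X K" "g \<in> set u" "height g = K"
  obtains w L R where "zigzag X K w" "wval u = L * wval w * R"
    "preserves_regular_left word_vals L (val (hd w))"
    "preserves_regular_right word_vals R (val (last w))"
    "height (hd u) = K \<Longrightarrow> L = 1 \<and> hd w = hd u"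
    "height (last u) = K \<Longrightarrow> R = 1 \<and> last w = last u"
  using assms unfolding factors_through_zigzag_def zigzag_factorisation_def by blast

lemma factors_through_zigzag_topsE:
  assumes "factors_through_zigzag K" "u \<in> words_upto X K" "u \<noteq> []" "height (hd u) = K" "height (last u) = K"
  obtains w where "zigzag X K w" "hd w = hd u" "last w = last u" "wval u = wval w"
proof -
  obtain w L R where "zigzag X K w" "wval u = L * wval w * R"
    "height (hd u) = K \<Longrightarrow> L = 1 \<and> hd w = hd u" "height (last u) = K \<Longrightarrow> R = 1 \<and> last w = last u"
    using factors_through_zigzagE[OF assms(1,2) hd_in_set[OF assms(3)] assms(4)] by blast
  then show ?thesis
    using that assms(4,5) by simp
qed

lemma factors_through_zigzag_last_topE:
  assumes "factors_through_zigzag K" "u \<in> words_upto X K" "u \<noteq> []" "height (last u) = K"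
  obtains w L where "zigzag X K w" "last w = last u" "wval u = L * wval w"
    "preserves_regular_left word_vals L (val (hd w))"
proof -
  obtain w L R where "zigzag X K w" "wval u = L * wval w * R" "preserves_regular_left word_vals L (val (hd w))"
    "height (last u) = K \<Longrightarrow> R = 1 \<and> last w = last u"
    using factors_through_zigzagE[OF assms(1,2) last_in_set[OF assms(3)] assms(4)] by blast
  then show ?thesis
    using that assms(4) by simp
qed

lemma factors_through_zigzag_hd_topE:
  assumes "factors_through_zigzag K" "u \<in> words_upto X K" "u \<noteq> []" "height (hd u) = K"
  obtains w R where "zigzag X K w" "hd w = hd u" "wval u = wval w * R"
    "preserves_regular_right word_vals R (val (last w))"
proof -
  obtain w L R where "zigzag X K w" "wval u = L * wval w * R" "preserves_regular_right word_vals R (val (last w))"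
    "height (hd u) = K \<Longrightarrow> L = 1 \<and> hd w = hd u"
    using factors_through_zigzagE[OF assms(1,2) hd_in_set[OF assms(3)] assms(4)] by blast
  then show ?thesis
    using that assms(4) by simp
qed

lemma factors_through_zigzag_0: "factors_through_zigzag 0"
  unfolding factors_through_zigzag_def
proof (intro ballI impI)
  fix u :: "'a gam list"
  assume u: "u \<in> words_upto X 0" "\<exists>g\<in>set u. height g = 0"
  then have "u \<noteq> []"
    by auto
  then have "wval u = 1 * wval [One] * 1" "hd u = One" "last u = One"
    using words_upto_0[OF u(1)] wval_words_upto_0[OF u(1)] by simp_all
  then show "\<exists>L w R. zigzag_factorisation 0 u L w R"
    unfolding zigzag_factorisation_def
    using preserves_regular_left_1[of word_vals] preserves_regular_right_1[of word_vals]
      zigzag.single[of One X 0]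
    by (intro exI[of _ 1] exI[of _ "[One]"] exI[of _ 1]) simp
qed

context
  fixes K :: nat
  assumes IH: "factors_through_zigzag K"
begin

lemma zigzag_through_lower:
  assumes g: "g \<in> Gamma X (Suc K)" and h: "h \<in> Gamma X (Suc K)" and A: "A \<in> words_upto X K"
  obtains w where "zigzag X (Suc K) w" "hd w = g" "last w = h" "wval (g # A @ [h]) = wval w"
proof (cases K)
  case 0
  then have "One \<in> {gl g, gr g}" "One \<in> {gl (hd [h]), gr (hd [h])}"
    using g h by auto
  then obtain w where "zigzag X (Suc K) w" "hd w = g" "last w = last [h]"
    "wval w = val g * val One * wval [h]"
    by (rule zigzag_extend_left[OF zigzag.single[OF h] g])
  moreover have "wval A = 1"
    using A 0 by (simp add: wval_words_upto_0)
  ultimately show ?thesis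
    using that by simp
next
  case (Suc i)
  obtain lg cg rg where tg: "g = Tri lg cg rg" "Tri lg cg rg \<in> Gam X" "cg \<in> Gam X" "rg \<in> Gam X"
    "height cg = i" "height rg = K"
    using g unfolding Suc by (rule Gamma_Suc_Suc_TriE)
  obtain lh ch rh where th: "h = Tri lh ch rh" "Tri lh ch rh \<in> Gam X" "lh \<in> Gam X" "ch \<in> Gam X"
    "height lh = K" "height ch = i"
    using h unfolding Suc by (rule Gamma_Suc_Suc_TriE)
  define mid where "mid = rg # cg # A @ [ch, lh]"
  have "mid \<in> words_upto X K" "mid \<noteq> []" "height (hd mid) = K" "height (last mid) = K"
    using A tg th Suc by (simp_all add: mid_def)
  then obtain w' where w': "zigzag X K w'" "hd w' = hd mid" "last w' = last mid" "wval mid = wval w'"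
    by (rule factors_through_zigzag_topsE[OF IH])
  then have "last w' \<in> {gl h, gr h}"
    using th(1) by (simp add: mid_def)
  then obtain w1 where w1: "zigzag X (Suc K) w1" "last w1 = h" "hd w' \<in> {gl (hd w1), gr (hd w1)}"
    "wval w' * val h = val (hd w') * wval w1"
    by (rule zigzag_lift_snoc[OF w'(1) h])
  have "hd w' \<in> {gl g, gr g}"
    using tg(1) w'(2) by (simp add: mid_def)
  then obtain w where w: "zigzag X (Suc K) w" "hd w = g" "last w = last w1"
    "wval w = val g * val (hd w') * wval w1"
    using w1(3) by (rule zigzag_extend_left[OF w1(1) g])
  have "wval (g # A @ [h]) = val g * wval ((rg # cg # A) @ [Tri lh ch rh])"
    unfolding tg(1) th(1) by (simp add: wval_Cons_Tri[OF tg(2)] del: wval_simps)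
  also have "\<dots> = val g * (wval mid * val h)"
    unfolding wval_snoc_Tri[OF th(2)] th(1) by (simp add: mid_def)
  finally show ?thesis
    using that w w1(2,4) w'(4) by (simp add: mult.assoc)
qed

lemma zigzag_between_tops:
  "u \<in> words_upto X (Suc K) \<Longrightarrow> u \<noteq> [] \<Longrightarrow> height (hd u) = Suc K \<Longrightarrow> height (last u) = Suc K \<Longrightarrow>
    \<exists>w. zigzag X (Suc K) w \<and> hd w = hd u \<and> last w = last u \<and> wval u = wval w"
proof (induction "length u" arbitrary: u rule: less_induct)
  case less
  obtain g rest where u: "u = g # rest"
    using less.prems(2) by (cases u) auto
  have g: "g \<in> Gamma X (Suc K)"
    using less.prems(1,3) u by (intro Gam_height_Gamma) auto
  show ?case
  proof (cases "rest = []")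
    case True
    then show ?thesis
      using u zigzag.single[OF g] by auto
  next
    case False
    then have "\<exists>x\<in>set rest. height x = Suc K"
      using less.prems(4) u last_in_set by fastforce
    then obtain A h B where rest: "rest = A @ h # B" "height h = Suc K" "\<forall>a\<in>set A. height a \<noteq> Suc K"
      by (rule split_list_first_propE)
    have h: "h \<in> Gamma X (Suc K)"
      using less.prems(1) u rest(1,2) by (intro Gam_height_Gamma) auto
    have A: "A \<in> words_upto X K"
      using words_upto_Suc_lower[of A X K] less.prems(1) u rest(1,3) by simp
    obtain w1 where w1: "zigzag X (Suc K) w1" "hd w1 = g" "last w1 = h" "wval (g # A @ [h]) = wval w1"
      by (rule zigzag_through_lower[OF g h A])
    have "\<exists>w. zigzag X (Suc K) w \<and> hd w = hd (h # B) \<and> last w = last (h # B) \<and> wval (h # B) = wval w"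
      using less.prems(1,4) u rest(1,2) by (intro less.hyps) auto
    then obtain w2 where w2: "zigzag X (Suc K) w2" "hd w2 = h" "last w2 = last u" "wval (h # B) = wval w2"
      using u rest(1) by auto
    obtain w where w: "zigzag X (Suc K) w" "hd w = hd w1" "last w = last w2" "wval w = wval w1 * wval w2"
      using zigzag_join[OF w1(1) w2(1)] w1(3) w2(2) by metis
    have "wval u = wval (g # A @ [h]) * wval (h # B)"
      using wval_overlap[of h "g # A" B] Gamma_subset_Gam[OF h] u rest(1) by simp
    then show ?thesis
      using w w1(2,4) w2(3,4) u by (intro exI[of _ w]) simp
  qed
qed

lemma zigzag_left_factor:
  assumes g: "g \<in> Gamma X (Suc K)" and A: "A \<in> words_upto X K"
  obtains w L where "zigzag X (Suc K) w" "last w = g" "wval (A @ [g]) = L * wval w"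
    "preserves_regular_left word_vals L (val (hd w))" "A = [] \<Longrightarrow> L = 1 \<and> hd w = g"
proof (cases "A = [] \<or> K = 0")
  case True
  then have "wval A = 1"
    using A wval_words_upto_0 by auto
  then show ?thesis
    using that[of "[g]" 1] zigzag.single[OF g] preserves_regular_left_1[of word_vals] by simp
next
  case False
  then obtain i where K: "K = Suc i"
    using not0_implies_Suc by blast
  obtain l c r where t: "g = Tri l c r" "Tri l c r \<in> Gam X" "l \<in> Gam X" "c \<in> Gam X"
    "height l = K" "height c = i"
    using g unfolding K by (rule Gamma_Suc_Suc_TriE)
  have "A @ [c, l] \<in> words_upto X K" "A @ [c, l] \<noteq> []" "height (last (A @ [c, l])) = K"
    using A t K by simp_all
  then obtain w' L' where w': "zigzag X K w'" "last w' = last (A @ [c, l])"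
    "wval (A @ [c, l]) = L' * wval w'" "preserves_regular_left word_vals L' (val (hd w'))"
    by (rule factors_through_zigzag_last_topE[OF IH])
  then have "last w' \<in> {gl g, gr g}"
    using t(1) by simp
  then obtain w where w: "zigzag X (Suc K) w" "last w = g" "hd w' \<in> {gl (hd w), gr (hd w)}"
    "wval w' * val g = val (hd w') * wval w"
    by (rule zigzag_lift_snoc[OF w'(1) g])
  have hd_w: "hd w \<in> Gam X" "hd w' \<in> Gam X"
    using zigzag_hd_last w(1) w'(1) Gamma_subset_Gam by blast+
  have "preserves_regular_left word_vals (L' * val (hd w')) (val (hd w))"
    using preserves_regular_left_mult[OF word_vals_mult_closed w'(4) val_idempotent[OF hd_w(2)]
        val_absorbs_child[OF hd_w(1) w(3)] val_in_word_vals[OF hd_w(1)]] .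
  moreover have "wval (A @ [g]) = wval (A @ [c, l]) * val g"
    unfolding t(1) by (rule wval_snoc_Tri[OF t(2)])
  then have "wval (A @ [g]) = L' * val (hd w') * wval w"
    unfolding w'(3) using w(4) by (simp add: mult.assoc)
  ultimately show ?thesis
    using that w(1,2) False by blast
qed

lemma zigzag_right_factor:
  assumes h: "h \<in> Gamma X (Suc K)" and C: "C \<in> words_upto X K"
  obtains w R where "zigzag X (Suc K) w" "hd w = h" "wval (h # C) = wval w * R"
    "preserves_regular_right word_vals R (val (last w))" "C = [] \<Longrightarrow> R = 1 \<and> last w = h"
proof (cases "C = [] \<or> K = 0")
  case True
  then have "wval C = 1"
    using C wval_words_upto_0 by auto
  then show ?thesis
    using that[of "[h]" 1] zigzag.single[OF h] preserves_regular_right_1[of word_vals] by simp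
next
  case False
  then obtain i where K: "K = Suc i"
    using not0_implies_Suc by blast
  obtain l c r where t: "h = Tri l c r" "Tri l c r \<in> Gam X" "c \<in> Gam X" "r \<in> Gam X"
    "height c = i" "height r = K"
    using h unfolding K by (rule Gamma_Suc_Suc_TriE)
  have "r # c # C \<in> words_upto X K" "r # c # C \<noteq> []" "height (hd (r # c # C)) = K"
    using C t K by simp_all
  then obtain w' R' where w': "zigzag X K w'" "hd w' = hd (r # c # C)"
    "wval (r # c # C) = wval w' * R'" "preserves_regular_right word_vals R' (val (last w'))"
    by (rule factors_through_zigzag_hd_topE[OF IH])
  then have "hd w' \<in> {gl h, gr h}"
    using t(1) by simp
  then obtain w where w: "zigzag X (Suc K) w" "hd w = h" "last w' \<in> {gl (last w), gr (last w)}"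
    "val h * wval w' = wval w * val (last w')"
    by (rule zigzag_lift_cons[OF w'(1) h])
  have last_w: "last w \<in> Gam X" "last w' \<in> Gam X"
    using zigzag_hd_last w(1) w'(1) Gamma_subset_Gam by blast+
  have "preserves_regular_right word_vals (val (last w') * R') (val (last w))"
    using preserves_regular_right_mult[OF word_vals_mult_closed w'(4) val_idempotent[OF last_w(2)]
        val_absorbs_child[OF last_w(1) w(3)] val_in_word_vals[OF last_w(1)]] .
  moreover have "wval (h # C) = val h * wval (r # c # C)"
    unfolding t(1) by (rule wval_Cons_Tri[OF t(2)])
  then have "wval (h # C) = wval w * (val (last w') * R')"
    unfolding w'(3) using w(4) by (simp add: mult.assoc[symmetric])
  ultimately show ?thesis
    using that w(1,2) False by blast
qed

lemma zigzag_left_open: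
  assumes u: "u \<in> words_upto X (Suc K)" "u \<noteq> []" "height (last u) = Suc K"
  obtains w L where "zigzag X (Suc K) w" "last w = last u" "wval u = L * wval w"
    "preserves_regular_left word_vals L (val (hd w))" "height (hd u) = Suc K \<Longrightarrow> L = 1 \<and> hd w = hd u"
proof -
  have "\<exists>x\<in>set u. height x = Suc K"
    using u(2,3) last_in_set by blast
  then obtain A g B where split: "u = A @ g # B" "height g = Suc K" "\<forall>a\<in>set A. height a \<noteq> Suc K"
    by (rule split_list_first_propE)
  have A: "A \<in> words_upto X K"
    using words_upto_Suc_lower[of A X K] u(1) split(1,3) by simp
  have g: "g \<in> Gamma X (Suc K)"
    using u(1) split(1,2) by (intro Gam_height_Gamma) auto
  obtain w1 L where w1: "zigzag X (Suc K) w1" "last w1 = g" "wval (A @ [g]) = L * wval w1"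
    "preserves_regular_left word_vals L (val (hd w1))" "A = [] \<Longrightarrow> L = 1 \<and> hd w1 = g"
    using zigzag_left_factor[OF g A] by blast
  have "\<exists>w. zigzag X (Suc K) w \<and> hd w = hd (g # B) \<and> last w = last (g # B) \<and> wval (g # B) = wval w"
    using u(1,3) split(1,2) by (intro zigzag_between_tops) auto
  then obtain w2 where w2: "zigzag X (Suc K) w2" "hd w2 = g" "last w2 = last u" "wval (g # B) = wval w2"
    using split(1) by auto
  obtain w where w: "zigzag X (Suc K) w" "hd w = hd w1" "last w = last w2" "wval w = wval w1 * wval w2"
    using zigzag_join[OF w1(1) w2(1)] w1(2) w2(2) by metis
  have "wval u = wval (A @ [g]) * wval (g # B)"
    using wval_overlap[OF Gamma_subset_Gam[OF g], of A B] split(1) by simp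
  also have "\<dots> = L * wval w"
    unfolding w1(3) w2(4) w(4) by (simp add: mult.assoc)
  finally have val_u: "wval u = L * wval w" .
  have top: "height (hd u) = Suc K \<Longrightarrow> L = 1 \<and> hd w = hd u"
    using w1(5) w(2) split by (cases A) auto
  have "last w = last u" "preserves_regular_left word_vals L (val (hd w))"
    using w(2,3) w1(4) w2(3) by simp_all
  with val_u top show ?thesis
    using that[OF w(1)] by blast
qed

lemma factors_through_zigzag_Suc: "factors_through_zigzag (Suc K)"
  unfolding factors_through_zigzag_def
proof (intro ballI impI)
  fix u
  assume u: "u \<in> words_upto X (Suc K)" "\<exists>g\<in>set u. height g = Suc K"
  from u(2) obtain P h C where split: "u = P @ h # C" "height h = Suc K" "\<forall>c\<in>set C. height c \<noteq> Suc K"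
    by (rule split_list_last_propE)
  have h: "h \<in> Gamma X (Suc K)"
    using u(1) split(1,2) by (intro Gam_height_Gamma) auto
  have "P @ [h] \<in> words_upto X (Suc K)" "P @ [h] \<noteq> []" "height (last (P @ [h])) = Suc K"
    using u(1) split(1,2) by auto
  then obtain w1 L where w1: "zigzag X (Suc K) w1" "last w1 = last (P @ [h])" "wval (P @ [h]) = L * wval w1"
    "preserves_regular_left word_vals L (val (hd w1))"
    "height (hd (P @ [h])) = Suc K \<Longrightarrow> L = 1 \<and> hd w1 = hd (P @ [h])"
    using zigzag_left_open by blast
  have "hd (P @ [h]) = hd u"
    using split(1) by (cases P) auto
  have "C \<in> words_upto X K"
    using words_upto_Suc_lower[of C X K] u(1) split(1,3) by simp
  then obtain w3 R where w3: "zigzag X (Suc K) w3" "hd w3 = h" "wval (h # C) = wval w3 * R"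
    "preserves_regular_right word_vals R (val (last w3))" "C = [] \<Longrightarrow> R = 1 \<and> last w3 = h"
    using zigzag_right_factor[OF h] by blast
  obtain w where w: "zigzag X (Suc K) w" "hd w = hd w1" "last w = last w3" "wval w = wval w1 * wval w3"
    using zigzag_join[OF w1(1) w3(1)] w1(2) w3(2) by (metis last_snoc)
  have "wval u = wval (P @ [h]) * wval (h # C)"
    using wval_overlap[OF Gamma_subset_Gam[OF h], of P C] split(1) by simp
  also have "\<dots> = L * wval w * R"
    unfolding w1(3) w3(3) w(4) by (simp add: mult.assoc)
  finally have "wval u = L * wval w * R" .
  moreover have "height (hd u) = Suc K \<longrightarrow> L = 1 \<and> hd w = hd u"
    using w1(5) w(2) \<open>hd (P @ [h]) = hd u\<close> by simp
  moreover have "height (last u) = Suc K \<longrightarrow> R = 1 \<and> last w = last u"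
    using w3(5) w(3) split by (cases C rule: rev_cases) auto
  moreover have "preserves_regular_left word_vals L (val (hd w))"
    "preserves_regular_right word_vals R (val (last w))"
    using w(2,3) w1(4) w3(4) by simp_all
  ultimately show "\<exists>L w R. zigzag_factorisation (Suc K) u L w R"
    unfolding zigzag_factorisation_def using w(1) by blast
qed

end

lemma factors_through_zigzag: "factors_through_zigzag K"
  by (induction K) (simp_all add: factors_through_zigzag_0 factors_through_zigzag_Suc)

lemma regular_in_word_vals_wval:
  assumes "set u \<subseteq> Gam X"
  shows "regular_in word_vals (wval u)"
proof (cases "u = []")
  case True
  then show ?thesis
    unfolding regular_in_def using wval_in_word_vals[of "[]"] by auto
next
  case False
  define K where "K = Max (height ` set u)"
  have "K \<in> height ` set u"
    unfolding K_def using False by (intro Max_in) auto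
  then obtain g where "g \<in> set u" "height g = K"
    by blast
  moreover have "u \<in> words_upto X K"
    using assms by (simp add: words_upto_def K_def)
  ultimately obtain w L R where w: "zigzag X K w" "wval u = L * wval w * R"
    "preserves_regular_left word_vals L (val (hd w))" "preserves_regular_right word_vals R (val (last w))"
    using factors_through_zigzagE[OF factors_through_zigzag] by metis
  have ends: "w \<noteq> []" "set w \<subseteq> Gam X"
    using zigzag_hd_last[OF w(1)] zigzag_subset_Gam[OF w(1)] by auto
  have "regular_in word_vals (wval w * R)"
    using w(4) regular_in_word_vals_zigzag[OF w(1)] wval_mult_last[OF ends]
    unfolding preserves_regular_right_def by blast
  moreover have "val (hd w) * (wval w * R) = wval w * R"
    using hd_mult_wval[OF ends] by (simp add: mult.assoc[symmetric])
  ultimately show ?thesis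
    using w(2,3) unfolding preserves_regular_left_def by (simp add: mult.assoc)
qed

section \<open>The map \<open>\<psi>\<close> on \<open>FT(X)\<close>\<close>

definition class_val :: "'a gam list set \<Rightarrow> 's" where
  "class_val A = the (wval (SOME u. u \<in> A))"

lemma class_val_cls: "u \<in> Gplus X \<Longrightarrow> class_val (cls X u) = the (wval u)"
  unfolding class_val_def using rho_wval[OF rho_some_cls] by simp

lemma FT_iff: "A \<in> FT X \<longleftrightarrow> (\<exists>u\<in>Gplus X. A = cls X u \<and> wval u \<noteq> None)"
proof
  assume "A \<in> FT X"
  then obtain u where u: "u \<in> Gplus X" "A = cls X u" "cls X u \<noteq> cls X [One]"
    unfolding FT_def FT1_def by auto
  have "wval u \<noteq> None"
  proof
    assume "wval u = None"
    then have "\<forall>g\<in>set u. g = One"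
      using wval_eq_None_iff[of u] u(1) by (simp add: Gplus_def)
    then have "rho X u [One]"
      by (rule rho_all_One[OF u(1)])
    then show False
      using u(3) cls_eqI by blast
  qed
  then show "\<exists>u\<in>Gplus X. A = cls X u \<and> wval u \<noteq> None"
    using u by blast
next
  assume "\<exists>u\<in>Gplus X. A = cls X u \<and> wval u \<noteq> None"
  then obtain u where u: "u \<in> Gplus X" "A = cls X u" "wval u \<noteq> None"
    by blast
  have "u \<in> cls X u"
    using u(1) by (simp add: cls_def rho.refl)
  have "cls X u \<noteq> cls X [One]"
  proof
    assume "cls X u = cls X [One]"
    then have "rho X [One] u"
      using \<open>u \<in> cls X u\<close> by (simp add: cls_def)
    then show False
      using rho_wval[of "[One]" u] u(3) by simp
  qed
  then show "A \<in> FT X"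
    using u unfolding FT_def FT1_def by auto
qed

lemma class_val_mult:
  assumes "A \<in> FT X" "B \<in> FT X"
  shows "ft_mult X A B \<in> FT X" "class_val (ft_mult X A B) = class_val A * class_val B"
proof -
  obtain u v where u: "u \<in> Gplus X" "A = cls X u" "wval u \<noteq> None"
    and v: "v \<in> Gplus X" "B = cls X v" "wval v \<noteq> None"
    using assms unfolding FT_iff by blast
  have uv: "u @ v \<in> Gplus X" "ft_mult X A B = cls X (u @ v)"
    using u v ft_mult_cls by (auto simp: Gplus_def)
  then show "ft_mult X A B \<in> FT X"
    using u(3) unfolding FT_iff by (intro bexI[of _ "u @ v"]) auto
  show "class_val (ft_mult X A B) = class_val A * class_val B"
    using u v uv class_val_cls by auto
qed

lemma class_val_image: "class_val ` FT X = Some -` word_vals"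
proof
  show "class_val ` FT X \<subseteq> Some -` word_vals"
    using class_val_cls wval_in_word_vals by (fastforce simp: FT_iff Gplus_def)
next
  show "Some -` word_vals \<subseteq> class_val ` FT X"
  proof
    fix a assume "a \<in> Some -` word_vals"
    then obtain w where w: "set w \<subseteq> Gam X" "wval w = Some a"
      by (auto simp: word_vals_def)
    then have "w \<in> Gplus X"
      by (cases w) (auto simp: Gplus_def)
    then have "cls X w \<in> FT X"
      using w(2) unfolding FT_iff by auto
    then show "a \<in> class_val ` FT X"
      using w(2) class_val_cls[OF \<open>w \<in> Gplus X\<close>] by (intro image_eqI[of _ _ "cls X w"]) auto
  qed
qed

lemma class_val_Leaf:
  assumes "x \<in> X"
  shows "cls X [Leaf x] \<in> FT X" "class_val (cls X [Leaf x]) = \<phi> x"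
proof -
  have "[Leaf x] \<in> Gplus X"
    using assms by (simp add: Gplus_def)
  then show "cls X [Leaf x] \<in> FT X" "class_val (cls X [Leaf x]) = \<phi> x"
    unfolding FT_iff using class_val_cls by auto
qed

lemma regular_subsemigroup_class_val_image:
  assumes "X \<noteq> {}"
  shows "regular_subsemigroup (class_val ` FT X)"
proof -
  obtain x where "x \<in> X"
    using assms by blast
  then have "\<phi> x \<in> Some -` word_vals"
    using val_in_word_vals[of "Leaf x"] by simp
  then show ?thesis
    unfolding class_val_image
  proof (intro regular_subsemigroup_Some_vimage)
    show "a * b \<in> word_vals" if "a \<in> word_vals" "b \<in> word_vals" for a b
      using that by (rule word_vals_mult_closed)
    show "regular_in word_vals a" if "a \<in> word_vals" for a
      using that regular_in_word_vals_wval by (auto simp: word_vals_def)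
  qed blast
qed

end

theorem proposition5p5:
  fixes X :: "'a set" and \<phi> :: "'a \<Rightarrow> 's::semigroup_mult"
  assumes "X \<noteq> {}"
    and "regular_semigroup TYPE('s)"
    and "inj_on \<phi> X"
    and "\<phi> ` X \<subseteq> idempotents"
    and "\<And>T. regular_subsemigroup T \<Longrightarrow> \<phi> ` X \<subseteq> T \<Longrightarrow> T = UNIV"
  shows "\<exists>\<psi> :: 'a gam list set \<Rightarrow> 's.
           (\<forall>A\<in>FT X. \<forall>B\<in>FT X. \<psi> (ft_mult X A B) = \<psi> A * \<psi> B)
         \<and> \<psi> ` FT X = UNIV
         \<and> (\<forall>x\<in>X. \<psi> (cls X [Leaf x]) = \<phi> x)"
proof -
  interpret gamma_eval X \<phi>
    using assms(2,4) by unfold_locales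
  have "\<phi> ` X \<subseteq> class_val ` FT X"
    using class_val_Leaf by (metis image_eqI image_subsetI)
  then have "class_val ` FT X = UNIV"
    using assms(5) regular_subsemigroup_class_val_image[OF assms(1)] by blast
  with class_val_mult(2) class_val_Leaf(2) show ?thesis
    by (intro exI[of _ class_val]) simp
qed

end
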